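(* Let $k$ be a positive integer. If $H$ is a thickened $4k$-star, then $\mathrm{ecrw}(H)\ge k$.
   Context: A thickened $n$-star is the graph $S_{n,n}$ obtained from the star $K_{1,n}$ by replacing each edge with $n$ internally vertex-disjoint paths of length 2; explicitly, vertices $c$, $u_1,\dots,u_n$ and $v_{i,j}$ ($i,j\in[n]$), with edges $cv_{i,j}$ and $u_iv_{i,j}$. A tree-cut decomposition of a graph $G$ is a pair $\mathcal{T}=(T,\{X_t\}_{t\in V(T)})$ where $T$ is a tree and the bags $X_t\subseteq V(G)$ are pairwise disjoint (possibly empty) with $\bigcup_{t\in V(T)}X_t=V(G)$. For a node $t$ of $T$, let $T_1,\dots,T_m$ be the connected components of $T-t$ and $Z_i=\bigcup_{s\in V(T_i)}X_s$; $\mathrm{cross}_{\mathcal{T}}(t)$ is the number of edges of $G$ whose two endpoints lie in two distinct sets among $Z_1,\dots,Z_m$ (if $T$ has one node, $\mathrm{cross}_{\mathcal T}(t)=0$). The crossing number of $\mathcal{T}$ is $\max_{t}\mathrm{cross}_{\mathcal{T}}(t)$, and the thickness of $\mathcal{T}$ is $\max_t|X_t|$. The edge-crossing width of $\mathcal T$ is the maximum of its crossing number and its thickness, and $\mathrm{ecrw}(G)$ is the minimum edge-crossing width over all tree-cut decompositions of $G$. *)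

theory Defs
  imports Main
begin

(* Simple graphs: vertex set V :: 'v set, edge set E :: 'v set set (2-element sets). *)

datatype tsvert = Ctr | U nat | W nat nat

definition tstar_V :: "nat \<Rightarrow> tsvert set" where
  "tstar_V n = {Ctr} \<union> {U i | i. i \<in> {1..n}} \<union> {W i j | i j. i \<in> {1..n} \<and> j \<in> {1..n}}"

definition tstar_E :: "nat \<Rightarrow> tsvert set set" where
  "tstar_E n = {{Ctr, W i j} | i j. i \<in> {1..n} \<and> j \<in> {1..n}}
             \<union> {{U i, W i j} | i j. i \<in> {1..n} \<and> j \<in> {1..n}}"

definition tree_adj :: "nat set set \<Rightarrow> nat set \<Rightarrow> nat \<Rightarrow> nat \<Rightarrow> bool" where
  "tree_adj TE S s s' \<longleftrightarrow> {s, s'} \<in> TE \<and> s \<in> S \<and> s' \<in> S"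

definition is_tree :: "nat set \<Rightarrow> nat set set \<Rightarrow> bool" where
  "is_tree N TE \<longleftrightarrow> finite N \<and> N \<noteq> {} \<and>
     (\<forall>e\<in>TE. card e = 2 \<and> e \<subseteq> N) \<and>
     (\<forall>s\<in>N. \<forall>s'\<in>N. (tree_adj TE N)\<^sup>*\<^sup>* s s') \<and>
     card TE + 1 = card N"

definition same_comp :: "nat set \<Rightarrow> nat set set \<Rightarrow> nat \<Rightarrow> nat \<Rightarrow> nat \<Rightarrow> bool" where
  "same_comp N TE t s s' \<longleftrightarrow> (tree_adj TE (N - {t}))\<^sup>*\<^sup>* s s'"

definition is_tcd :: "'v set \<Rightarrow> nat set \<Rightarrow> nat set set \<Rightarrow> (nat \<Rightarrow> 'v set) \<Rightarrow> bool" where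
  "is_tcd V N TE X \<longleftrightarrow> is_tree N TE \<and>
     (\<forall>s\<in>N. \<forall>s'\<in>N. s \<noteq> s' \<longrightarrow> X s \<inter> X s' = {}) \<and>
     (\<Union>s\<in>N. X s) = V"

definition cross :: "'v set set \<Rightarrow> nat set \<Rightarrow> nat set set \<Rightarrow> (nat \<Rightarrow> 'v set) \<Rightarrow> nat \<Rightarrow> nat" where
  "cross E N TE X t = card {e \<in> E. \<exists>u v s s'. e = {u, v} \<and> s \<in> N - {t} \<and> s' \<in> N - {t}
        \<and> u \<in> X s \<and> v \<in> X s' \<and> \<not> same_comp N TE t s s'}"

definition ecw :: "'v set set \<Rightarrow> nat set \<Rightarrow> nat set set \<Rightarrow> (nat \<Rightarrow> 'v set) \<Rightarrow> nat" where
  "ecw E N TE X = max (Max ((cross E N TE X) ` N)) (Max ((\<lambda>t. card (X t)) ` N))"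

definition ecrw :: "'v set \<Rightarrow> 'v set set \<Rightarrow> nat" where
  "ecrw V E = Inf {ecw E N TE X | N TE X. is_tcd V N TE X}"

end

theory Submission
  imports Defs
begin

text \<open>Let the centre \<open>c\<close> lie in the bag of the node \<open>t\<^sub>0\<close> and let \<open>w\<close> be the width. If \<open>w < n\<close>,
  some leaf \<open>u\<^sub>i\<close> lies in the bag of another node; let \<open>s\<close> be the neighbour of \<open>t\<^sub>0\<close> on the tree
  path towards it. Each of the \<open>n\<close> vertices \<open>v\<^sub>i\<^sub>,\<^sub>j\<close> lies in the bag of \<open>t\<^sub>0\<close>, or in a component
  of \<open>T - t\<^sub>0\<close> other than the one of \<open>s\<close> (then the edge \<open>u\<^sub>i v\<^sub>i\<^sub>,\<^sub>j\<close> crosses at \<open>t\<^sub>0\<close>), or in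
  the bag of \<open>s\<close>, or elsewhere in the component of \<open>s\<close> (then the edge \<open>c v\<^sub>i\<^sub>,\<^sub>j\<close> crosses at
  \<open>s\<close>). Each of the four classes has at most \<open>w\<close> elements, so \<open>n \<le> 4w\<close>.\<close>

lemma symp_tree_adj: "symp (tree_adj TE S)"
  by (auto intro: sympI simp: tree_adj_def insert_commute)

lemma tree_adj_rtranclp_sym: "(tree_adj TE S)\<^sup>*\<^sup>* a b \<Longrightarrow> (tree_adj TE S)\<^sup>*\<^sup>* b a"
  using sympD[OF symp_rtranclp[OF symp_tree_adj]] .

lemma tree_adj_rtranclp_mono:
  assumes "S \<subseteq> S'" and "(tree_adj TE S)\<^sup>*\<^sup>* a b"
  shows "(tree_adj TE S')\<^sup>*\<^sup>* a b"
  using assms(2) by (rule mono_rtranclp[rule_format, rotated])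
    (use assms(1) in \<open>auto simp: tree_adj_def\<close>)

lemma tree_adj_rtranclp_last_step:
  assumes "(tree_adj TE S)\<^sup>*\<^sup>* a t" and "a \<noteq> t"
  shows "\<exists>s \<in> S - {t}. tree_adj TE S s t \<and> (tree_adj TE (S - {t}))\<^sup>*\<^sup>* a s"
  using assms
proof (induction rule: converse_rtranclp_induct)
  case base
  then show ?case by simp
next
  case (step a a')
  show ?case
  proof (cases "a' = t")
    case True
    then show ?thesis using step by (auto simp: tree_adj_def)
  next
    case False
    then obtain s where s: "s \<in> S - {t}" "tree_adj TE S s t" "(tree_adj TE (S - {t}))\<^sup>*\<^sup>* a' s"
      using step.IH by blast
    have "tree_adj TE (S - {t}) a a'"
      using step.hyps(1) False step.prems by (auto simp: tree_adj_def)
    then show ?thesis using s by (meson converse_rtranclp_into_rtranclp)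
  qed
qed

text \<open>Every vertex other than the root \<open>r\<close> is sent to an edge towards a vertex strictly closer to
  \<open>r\<close>; this assignment is injective.\<close>

lemma card_le_Suc_card_edges_if_connected:
  assumes "finite N" "finite F" "r \<in> N" and conn: "\<forall>x\<in>N. (tree_adj F N)\<^sup>*\<^sup>* x r"
  shows "card N \<le> card F + 1"
proof -
  let ?R = "tree_adj F N"
  define d where "d x = (LEAST m. (?R ^^ m) x r)" for x
  have closer: "\<exists>y. ?R x y \<and> d y < d x" if x: "x \<in> N" "x \<noteq> r" for x
  proof -
    obtain m where "(?R ^^ m) x r" using rtranclp_imp_relpowp conn x(1) by metis
    then have dx: "(?R ^^ d x) x r" unfolding d_def by (rule LeastI)
    have "d x \<noteq> 0"
    proof
      assume "d x = 0"
      with dx have "x = r" by simp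
      with x(2) show False ..
    qed
    then obtain m' where dm: "d x = Suc m'"
      using not0_implies_Suc by blast
    obtain y where y: "?R x y" "(?R ^^ m') y r"
      using relpowp_Suc_D2[OF dx[unfolded dm]] by blast
    have "d y \<le> m'" unfolding d_def using y(2) by (rule Least_le)
    then show ?thesis using y(1) dm by auto
  qed
  define g where "g x = (SOME y. ?R x y \<and> d y < d x)" for x
  have g: "?R x (g x)" "d (g x) < d x" if "x \<in> N" "x \<noteq> r" for x
    unfolding g_def using someI_ex[OF closer[OF that]] by auto
  have "inj_on (\<lambda>x. {x, g x}) (N - {r})"
  proof (rule inj_onI, rule ccontr)
    fix x x' assume x: "x \<in> N - {r}" "x' \<in> N - {r}" and "{x, g x} = {x', g x'}" "x \<noteq> x'"
    then have "x = g x'" "x' = g x" by (auto simp: doubleton_eq_iff)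
    moreover have "d (g x) < d x" "d (g x') < d x'" using g(2) x by auto
    ultimately show False by (metis less_asym)
  qed
  moreover have "(\<lambda>x. {x, g x}) ` (N - {r}) \<subseteq> F"
    using g(1) by (auto simp: tree_adj_def)
  ultimately have "card (N - {r}) \<le> card F"
    by (rule card_inj_on_le) (rule assms(2))
  then show ?thesis using assms(1,3) by simp
qed

text \<open>Otherwise removing the edge \<open>{s, t\<^sub>0}\<close> would leave the tree connected, contradicting
  \<open>card TE + 1 = card N\<close>.\<close>

lemma tree_neighbours_in_same_comp_eq:
  assumes tree: "is_tree N TE" and t0: "t0 \<in> N" and "s \<in> N" "s' \<in> N" "s' \<noteq> t0"
    and e: "{s, t0} \<in> TE" and e': "{s', t0} \<in> TE"
    and p: "(tree_adj TE (N - {t0}))\<^sup>*\<^sup>* s' s"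
  shows "s = s'"
proof (rule ccontr)
  assume ne: "s \<noteq> s'"
  define F where "F = TE - {{s, t0}}"
  have finN: "finite N" and conn: "\<forall>a\<in>N. \<forall>b\<in>N. (tree_adj TE N)\<^sup>*\<^sup>* a b"
    and cardT: "card TE + 1 = card N" and sub: "\<forall>e\<in>TE. card e = 2 \<and> e \<subseteq> N"
    using tree by (auto simp: is_tree_def)
  have "TE \<subseteq> Pow N" using sub by auto
  then have finT: "finite TE" using finN by (rule finite_subset[OF _ finite_Pow_iff[THEN iffD2]])
  have "(tree_adj F N)\<^sup>*\<^sup>* s' s"
    using p by (rule mono_rtranclp[rule_format, rotated]) (auto simp: tree_adj_def F_def doubleton_eq_iff)
  then have "(tree_adj F N)\<^sup>*\<^sup>* s s'"
    by (rule tree_adj_rtranclp_sym)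
  moreover have "tree_adj F N s' t0"
    using e' ne assms by (auto simp: tree_adj_def F_def doubleton_eq_iff)
  ultimately have s_t0: "(tree_adj F N)\<^sup>*\<^sup>* s t0"
    by (rule rtranclp.rtrancl_into_rtrancl)
  have step: "(tree_adj F N)\<^sup>*\<^sup>* a b" if "tree_adj TE N a b" for a b
  proof (cases "{a, b} = {s, t0}")
    case True
    then consider "a = s" "b = t0" | "a = t0" "b = s" by (auto simp: doubleton_eq_iff)
    then show ?thesis using s_t0 tree_adj_rtranclp_sym[OF s_t0] by cases simp_all
  next
    case False
    then show ?thesis using that by (intro r_into_rtranclp) (simp add: tree_adj_def F_def)
  qed
  have "(tree_adj F N)\<^sup>*\<^sup>* a t0" if "a \<in> N" for a
  proof -
    have "(tree_adj TE N)\<^sup>*\<^sup>* a t0" using conn that t0 by blast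
    then show ?thesis
      by (induction rule: rtranclp_induct) (simp_all add: rtranclp_trans[OF _ step])
  qed
  then have "card N \<le> card F + 1"
    using card_le_Suc_card_edges_if_connected[OF finN _ t0] finT F_def by auto
  moreover have "card F + 1 = card TE"
    using e finT card_gt_0_iff[of TE] by (auto simp: F_def card_Diff_singleton)
  ultimately show False using cardT by linarith
qed

lemma not_same_comp_across_neighbour:
  assumes tree: "is_tree N TE" and t0: "t0 \<in> N" and e: "{s, t0} \<in> TE" and "s \<in> N"
    and x: "x \<in> N - {t0}" and comp: "same_comp N TE t0 s x"
  shows "\<not> same_comp N TE s t0 x"
proof
  assume "same_comp N TE s t0 x"
  then have "(tree_adj TE (N - {s}))\<^sup>*\<^sup>* x t0"
    unfolding same_comp_def by (rule tree_adj_rtranclp_sym)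
  then obtain s' where s': "s' \<in> N - {s} - {t0}" "tree_adj TE (N - {s}) s' t0"
      "(tree_adj TE (N - {s} - {t0}))\<^sup>*\<^sup>* x s'"
    using tree_adj_rtranclp_last_step x by blast
  have "(tree_adj TE (N - {t0}))\<^sup>*\<^sup>* x s'"
    by (rule tree_adj_rtranclp_mono[OF _ s'(3)]) blast
  then have "(tree_adj TE (N - {t0}))\<^sup>*\<^sup>* s' s"
    using comp unfolding same_comp_def by (metis tree_adj_rtranclp_sym rtranclp_trans)
  moreover have "{s', t0} \<in> TE" using s'(2) by (simp add: tree_adj_def)
  ultimately have "s = s'"
    using tree_neighbours_in_same_comp_eq[OF tree t0 \<open>s \<in> N\<close>] e s'(1) by blast
  then show False using s'(1) by blast
qed

lemma same_comp_trans:
  "same_comp N TE t a b \<Longrightarrow> same_comp N TE t a c \<Longrightarrow> same_comp N TE t b c"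
  unfolding same_comp_def using tree_adj_rtranclp_sym rtranclp_trans by metis

lemma card_le_cross:
  assumes "finite E" and p: "p \<in> N - {t}" "u \<in> X p"
    and A: "\<forall>w\<in>A. {u, w} \<in> E \<and> (\<exists>q\<in>N - {t}. w \<in> X q \<and> \<not> same_comp N TE t p q)"
  shows "card A \<le> cross E N TE X t"
proof -
  let ?C = "{e \<in> E. \<exists>u v s s'. e = {u, v} \<and> s \<in> N - {t} \<and> s' \<in> N - {t}
    \<and> u \<in> X s \<and> v \<in> X s' \<and> \<not> same_comp N TE t s s'}"
  have "(\<lambda>w. {u, w}) ` A \<subseteq> ?C"
  proof
    fix e assume "e \<in> (\<lambda>w. {u, w}) ` A"
    then obtain w q where "e = {u, w}" "e \<in> E" "q \<in> N - {t}" "w \<in> X q" "\<not> same_comp N TE t p q"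
      using A by blast
    then show "e \<in> ?C" using p by blast
  qed
  then have "card ((\<lambda>w. {u, w}) ` A) \<le> cross E N TE X t"
    unfolding cross_def using assms(1) by (simp add: card_mono)
  moreover have "inj_on (\<lambda>w. {u, w}) A"
    by (auto simp: inj_on_def doubleton_eq_iff)
  ultimately show ?thesis by (simp add: card_image)
qed

text \<open>Neighbours of \<open>c \<in> X t\<^sub>0\<close> lying in the branch of \<open>T - t\<^sub>0\<close> at the neighbour \<open>s\<close> either lie in
  the bag of \<open>s\<close> or give an edge crossing at \<open>s\<close>, since \<open>s\<close> separates that branch from \<open>t\<^sub>0\<close>.\<close>

lemma card_branch_neighbours_le:
  assumes tree: "is_tree N TE" and "finite E" and t0: "t0 \<in> N" "c \<in> X t0"
    and s: "s \<in> N" "s \<noteq> t0" "{s, t0} \<in> TE" and "finite (X s)"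
    and C: "\<forall>v\<in>C. {c, v} \<in> E \<and> (\<exists>q\<in>N - {t0}. v \<in> X q \<and> same_comp N TE t0 s q)"
  shows "card C \<le> card (X s) + cross E N TE X s"
proof -
  have "card (C - X s) \<le> cross E N TE X s"
  proof (rule card_le_cross[OF \<open>finite E\<close>])
    show "t0 \<in> N - {s}" "c \<in> X t0" using t0 s by auto
    show "\<forall>v\<in>C - X s. {c, v} \<in> E \<and> (\<exists>q\<in>N - {s}. v \<in> X q \<and> \<not> same_comp N TE s t0 q)"
    proof
      fix v assume v: "v \<in> C - X s"
      then obtain q where q: "q \<in> N - {t0}" "v \<in> X q" "same_comp N TE t0 s q"
        using C by blast
      with v have "q \<noteq> s" by blast
      have "\<not> same_comp N TE s t0 q"
        using not_same_comp_across_neighbour[OF tree t0(1) s(3) s(1) q(1,3)] .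
      then show "{c, v} \<in> E \<and> (\<exists>q\<in>N - {s}. v \<in> X q \<and> \<not> same_comp N TE s t0 q)"
        using C v q \<open>q \<noteq> s\<close> by blast
    qed
  qed
  moreover have "card (C \<inter> X s) \<le> card (X s)"
    using \<open>finite (X s)\<close> by (simp add: card_mono)
  moreover have "card C \<le> card (C \<inter> X s) + card (C - X s)"
    by (metis Int_Diff_Un card_Un_le)
  ultimately show ?thesis by linarith
qed

lemma is_tcd_finite_nodes: "is_tcd V N TE X \<Longrightarrow> finite N"
  by (simp add: is_tcd_def is_tree_def)

lemma is_tcd_finite_bag: "is_tcd V N TE X \<Longrightarrow> finite V \<Longrightarrow> t \<in> N \<Longrightarrow> finite (X t)"
  unfolding is_tcd_def by (metis UN_upper finite_subset)

lemma cross_le_ecw: "is_tcd V N TE X \<Longrightarrow> t \<in> N \<Longrightarrow> cross E N TE X t \<le> ecw E N TE X"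
  unfolding ecw_def by (rule max.coboundedI1, rule Max_ge) (auto dest: is_tcd_finite_nodes)

lemma card_bag_le_ecw: "is_tcd V N TE X \<Longrightarrow> t \<in> N \<Longrightarrow> card (X t) \<le> ecw E N TE X"
  unfolding ecw_def by (rule max.coboundedI2, rule Max_ge) (auto dest: is_tcd_finite_nodes)

lemma finite_tstar_V: "finite (tstar_V n)"
proof -
  have "tstar_V n \<subseteq> insert Ctr (U ` {1..n} \<union> case_prod W ` ({1..n} \<times> {1..n}))"
    by (auto simp: tstar_V_def)
  then show ?thesis by (rule finite_subset) auto
qed

lemma finite_tstar_E: "finite (tstar_E n)"
proof -
  have "tstar_E n \<subseteq> Pow (tstar_V n)" by (auto simp: tstar_E_def tstar_V_def)
  then show ?thesis using finite_tstar_V finite_subset by blast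
qed

lemma tstar_E_leaf_edge: "i \<in> {1..n} \<Longrightarrow> j \<in> {1..n} \<Longrightarrow> {U i, W i j} \<in> tstar_E n"
  unfolding tstar_E_def by blast

lemma tstar_E_centre_edge: "i \<in> {1..n} \<Longrightarrow> j \<in> {1..n} \<Longrightarrow> {Ctr, W i j} \<in> tstar_E n"
  unfolding tstar_E_def by blast

lemma tstar_middle_vertices_le:
  assumes tcd: "is_tcd (tstar_V n) N TE X" and t0: "t0 \<in> N" "Ctr \<in> X t0"
    and i: "i \<in> {1..n}" and s1: "s1 \<in> N - {t0}" "U i \<in> X s1"
    and s: "s \<in> N - {t0}" "{s, t0} \<in> TE" "same_comp N TE t0 s1 s"
  shows "n \<le> card (X t0) + cross (tstar_E n) N TE X t0 + (card (X s) + cross (tstar_E n) N TE X s)"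
proof -
  have tree: "is_tree N TE" and cov: "(\<Union>t\<in>N. X t) = tstar_V n"
    using tcd by (auto simp: is_tcd_def)
  have finX: "finite (X t)" if "t \<in> N" for t
    using is_tcd_finite_bag[OF tcd finite_tstar_V that] .
  define Ws where "Ws = W i ` {1..n}"
  define A where "A = Ws \<inter> X t0"
  define B where "B = {v \<in> Ws. \<exists>q\<in>N - {t0}. v \<in> X q \<and> \<not> same_comp N TE t0 s q}"
  define C where "C = {v \<in> Ws. \<exists>q\<in>N - {t0}. v \<in> X q \<and> same_comp N TE t0 s q}"
  have "Ws \<subseteq> A \<union> B \<union> C"
  proof
    fix v assume "v \<in> Ws"
    moreover from this have "v \<in> tstar_V n" using i by (auto simp: Ws_def tstar_V_def)
    then obtain q where "q \<in> N" "v \<in> X q" using cov by blast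
    ultimately show "v \<in> A \<union> B \<union> C" by (cases "q = t0") (auto simp: A_def B_def C_def)
  qed
  moreover have "finite (A \<union> B \<union> C)" by (auto simp: A_def B_def C_def Ws_def)
  ultimately have "card Ws \<le> card (A \<union> B \<union> C)" by (rule card_mono[rotated])
  then have "n \<le> card (A \<union> B \<union> C)" by (simp add: Ws_def card_image inj_on_def)
  also have "\<dots> \<le> card A + card B + card C"
    by (meson card_Un_le add_le_mono1 le_trans)
  also have "card A \<le> card (X t0)"
    using card_mono[OF finX[OF t0(1)], of A] by (simp add: A_def)
  also have "card B \<le> cross (tstar_E n) N TE X t0"
  proof (rule card_le_cross[where X=X, OF finite_tstar_E s1])
    show "\<forall>v\<in>B. {U i, v} \<in> tstar_E n \<and> (\<exists>q\<in>N - {t0}. v \<in> X q \<and> \<not> same_comp N TE t0 s1 q)"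
    proof
      fix v assume "v \<in> B"
      then obtain j q where "v = W i j" "j \<in> {1..n}" "q \<in> N - {t0}" "v \<in> X q"
          "\<not> same_comp N TE t0 s q"
        unfolding B_def Ws_def by blast
      then show "{U i, v} \<in> tstar_E n \<and> (\<exists>q\<in>N - {t0}. v \<in> X q \<and> \<not> same_comp N TE t0 s1 q)"
        using i tstar_E_leaf_edge same_comp_trans[OF s(3)] by blast
    qed
  qed
  also have "card C \<le> card (X s) + cross (tstar_E n) N TE X s"
  proof (rule card_branch_neighbours_le[where X=X, OF tree finite_tstar_E t0])
    show "\<forall>v\<in>C. {Ctr, v} \<in> tstar_E n \<and> (\<exists>q\<in>N - {t0}. v \<in> X q \<and> same_comp N TE t0 s q)"
      using i tstar_E_centre_edge by (auto simp: C_def Ws_def)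
  qed (use s finX in auto)
  finally show ?thesis by simp
qed

lemma tstar_le_4_ecw:
  assumes tcd: "is_tcd (tstar_V n) N TE X"
  shows "n \<le> 4 * ecw (tstar_E n) N TE X"
proof -
  define w where "w = ecw (tstar_E n) N TE X"
  have tree: "is_tree N TE" and cov: "(\<Union>t\<in>N. X t) = tstar_V n"
    using tcd by (auto simp: is_tcd_def)
  have bag: "card (X t) \<le> w" and crossing: "cross (tstar_E n) N TE X t \<le> w" if "t \<in> N" for t
    unfolding w_def using card_bag_le_ecw[OF tcd that] cross_le_ecw[OF tcd that] by auto
  obtain t0 where t0: "t0 \<in> N" "Ctr \<in> X t0"
    using cov by (auto simp: tstar_V_def)
  show ?thesis
  proof (cases "n \<le> w")
    case True
    then show ?thesis by (simp add: w_def)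
  next
    case False
    have "\<not> U ` {1..n} \<subseteq> X t0"
    proof
      assume "U ` {1..n} \<subseteq> X t0"
      then have "card (U ` {1..n}) \<le> card (X t0)"
        by (rule card_mono[OF is_tcd_finite_bag[OF tcd finite_tstar_V t0(1)]])
      moreover have "card (U ` {1..n}) = n" by (simp add: card_image inj_on_def)
      ultimately show False using False bag[OF t0(1)] by simp
    qed
    then obtain i where i: "i \<in> {1..n}" "U i \<notin> X t0" by blast
    then have "U i \<in> tstar_V n" by (auto simp: tstar_V_def)
    then obtain s1 where s1: "s1 \<in> N" "U i \<in> X s1" using cov by blast
    with i have "s1 \<noteq> t0" by blast
    moreover have "(tree_adj TE N)\<^sup>*\<^sup>* s1 t0"
      using tree s1(1) t0(1) unfolding is_tree_def by blast
    ultimately obtain s where s: "s \<in> N - {t0}" "tree_adj TE N s t0" "same_comp N TE t0 s1 s"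
      using tree_adj_rtranclp_last_step unfolding same_comp_def by metis
    have "n \<le> card (X t0) + cross (tstar_E n) N TE X t0 + (card (X s) + cross (tstar_E n) N TE X s)"
      using tstar_middle_vertices_le[OF tcd t0 i(1)] s1 \<open>s1 \<noteq> t0\<close> s by (auto simp: tree_adj_def)
    also have "\<dots> \<le> 4 * w"
      using bag[OF t0(1)] crossing[OF t0(1)] bag[of s] crossing[of s] s(1) by simp
    finally show ?thesis by (simp add: w_def)
  qed
qed

lemma tstar_le_4_ecrw: "n \<le> 4 * ecrw (tstar_V n) (tstar_E n)"
proof -
  have "is_tcd (tstar_V n) {0} {} (\<lambda>_. tstar_V n)"
    by (simp add: is_tcd_def is_tree_def)
  then have "{ecw (tstar_E n) N TE X | N TE X. is_tcd (tstar_V n) N TE X} \<noteq> {}"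
    by blast
  then have "ecrw (tstar_V n) (tstar_E n) \<in> {ecw (tstar_E n) N TE X | N TE X. is_tcd (tstar_V n) N TE X}"
    unfolding ecrw_def by (rule Inf_nat_def1)
  then obtain N TE X where "ecrw (tstar_V n) (tstar_E n) = ecw (tstar_E n) N TE X"
      "is_tcd (tstar_V n) N TE X"
    by blast
  then show ?thesis using tstar_le_4_ecw by simp
qed

theorem lemma3p15:
  fixes k :: nat
  assumes "k \<ge> 1"
  shows "ecrw (tstar_V (4 * k)) (tstar_E (4 * k)) \<ge> k"
  using tstar_le_4_ecrw[of "4 * k"] by simp

end
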